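(* In the setting of the structural VAR $A(L)w_t = \epsilon_t$, $A(L)=A_0+A_1L+\cdots+A_pL^p$ with $A_0$ nonsingular, partition $w_t' = (y_t', x_t')$ with $y_t$ of dimension $G$ and $x_t$ of dimension $K$, $G+K=m$, and partition conformably $A(L) = \begin{bmatrix} A_{11}(L) & A_{12}(L)\\ A_{21}(L) & A_{22}(L)\end{bmatrix}$ and $\epsilon_t' = (\epsilon_{1t}', \epsilon_{2t}')$. Suppose the prior restrictions $A_{21}(L)\equiv 0$ and $E(\epsilon_{1t}\epsilon_{2t}')=0$ hold, and that for some $g\le G$ the $g$-th row $a_g'$ of $A=[A_0,\dots,A_p]$ satisfies $a_g'\Phi_g = 0'$ for a known $(p+1)m\times R_g$ matrix $\Phi_g$. Then the $g$-th equation is identified if and only if $$\operatorname{rank}\big[(A_{11}\ \ A_{12})\Phi_g\big] = G-1,$$ where $(A_{11}\ \ A_{12})$ denotes the $G\times(p+1)m$ matrix consisting of the first $G$ rows of $A=[A_0,A_1,\dots,A_p]$.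
   Context: Two structures $A$ and $FA$ (with $F$ a nonsingular $m\times m$ matrix and errors $F\epsilon_t$) generate the same reduced form and are observationally equivalent. A nonsingular $F$ is admissible if $FA$ and $F\epsilon_t$ satisfy the same prior restrictions as $A$ and $\epsilon_t$ (here including $A_{21}(L)\equiv 0$, the zero block covariance, and for each equation its own linear restrictions). The $g$-th equation is identified if and only if for every admissible $F$ the $g$-th row of $F$ has the form $(0,\dots,0,f_{gg},0,\dots,0)$ with $f_{gg}\ne 0$. *)

theory Defs
  imports "Jordan_Normal_Form.DL_Rank"
begin

text \<open>Structural VAR  A(L) w_t = eps_t,  A = [A_0, A_1, ..., A_p] is an m x (p+1)m real
matrix; column j of A belongs to lag j div m and to variable j mod m.  Indices are 0-based:
variables 0..G-1 form y_t, variables G..m-1 form x_t.\<close>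

text \<open>Prior restriction A_21(L) = 0: rows G..m-1 vanish in the y-columns of every lag.\<close>
definition zero_A21 :: "nat \<Rightarrow> nat \<Rightarrow> nat \<Rightarrow> real mat \<Rightarrow> bool" where
  "zero_A21 G m p A \<longleftrightarrow>
     (\<forall>i j. G \<le> i \<and> i < m \<and> j < Suc p * m \<and> j mod m < G \<longrightarrow> A $$ (i, j) = 0)"

text \<open>Prior restriction E(eps_1t eps_2t') = 0 (zero off-diagonal covariance blocks).\<close>
definition zero_cov_block :: "nat \<Rightarrow> nat \<Rightarrow> real mat \<Rightarrow> bool" where
  "zero_cov_block G m S \<longleftrightarrow>
     (\<forall>i j. i < G \<and> G \<le> j \<and> j < m \<longrightarrow> S $$ (i, j) = 0 \<and> S $$ (j, i) = 0)"

definition eq_restrictions :: "nat \<Rightarrow> (nat \<Rightarrow> real mat) \<Rightarrow> real mat \<Rightarrow> bool" where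
  "eq_restrictions m Phi A \<longleftrightarrow>
     (\<forall>i<m. transpose_mat (Phi i) *\<^sub>v row A i = 0\<^sub>v (dim_col (Phi i)))"

text \<open>F is admissible: nonsingular, and F A together with the errors F eps_t
(covariance F Sigma F') satisfy the same prior restrictions.\<close>
definition admissible ::
  "nat \<Rightarrow> nat \<Rightarrow> nat \<Rightarrow> real mat \<Rightarrow> real mat \<Rightarrow> (nat \<Rightarrow> real mat) \<Rightarrow> real mat \<Rightarrow> bool" where
  "admissible G m p A Sig Phi F \<longleftrightarrow>
     F \<in> carrier_mat m m \<and> invertible_mat F \<and>
     zero_A21 G m p (F * A) \<and>
     zero_cov_block G m (F * Sig * transpose_mat F) \<and>
     eq_restrictions m Phi (F * A)"

definition identified ::
  "nat \<Rightarrow> nat \<Rightarrow> nat \<Rightarrow> real mat \<Rightarrow> real mat \<Rightarrow> (nat \<Rightarrow> real mat) \<Rightarrow> nat \<Rightarrow> bool" where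
  "identified G m p A Sig Phi g \<longleftrightarrow>
     (\<forall>F. admissible G m p A Sig Phi F \<longrightarrow>
          (\<forall>j<m. j \<noteq> g \<longrightarrow> F $$ (g, j) = 0) \<and> F $$ (g, g) \<noteq> 0)"

end

theory Submission
  imports Defs
begin

(* An admissible F is block diagonal. Since A_21(L) = 0, the y-columns of lag 0 in F A are
   F_21 A_11,0, and A_11,0 is nonsingular because A_0 is block upper triangular; so F_21 = 0.
   Then F_22 is nonsingular and the (2,1) block of F Sigma F' is F_22 Sigma_22 F_12', so
   Sigma_22 F_12' = 0 and positive definiteness gives F_12 = 0. Hence the g-th row of an
   admissible F is (f', 0) with f' (A_11 A_12) Phi_g = 0: f lies in the left kernel of
   M = (A_11 A_12) Phi_g, which contains e_g since a_g' Phi_g = 0. Conversely, every x in that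
   left kernel gives the admissible matrix I + e_g w' (w = x with its g-th entry removed).
   So the g-th equation is identified iff the left kernel of M is spanned by e_g, and as the
   g-th row of M vanishes, this means rank M = G - 1. *)

context vec_space
begin

lemma orthogonal_complement_cols:
  fixes M :: "'a mat"
  assumes M: "M \<in> carrier_mat n r"
  shows "orthogonal_complement (set (cols M)) = {y \<in> carrier_vec n. transpose_mat M *\<^sub>v y = 0\<^sub>v r}"
proof -
  have cols: "set (cols M) = col M ` {..<r}"
    using M by (auto simp: cols_def)
  have "transpose_mat M *\<^sub>v y = 0\<^sub>v r \<longleftrightarrow> (\<forall>k<r. y \<bullet> col M k = 0)"
    if y: "y \<in> carrier_vec n" for y :: "'a vec"
  proof -
    have "y \<bullet> col M k = (transpose_mat M *\<^sub>v y) $ k" if "k < r" for k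
      using that y M comm_scalar_prod[OF y col_carrier_vec[OF that M]] by simp
    then show ?thesis
      using M by (auto simp: vec_eq_iff)
  qed
  then show ?thesis
    unfolding orthogonal_complement_def cols by auto
qed

lemma rank_indpt_subset_cols:
  fixes M :: "'a mat"
  assumes M: "M \<in> carrier_mat n r"
  obtains S where "S \<subseteq> set (cols M)" "lin_indpt S" "card S = rank M"
    "orthogonal_complement S = {y \<in> carrier_vec n. transpose_mat M *\<^sub>v y = 0\<^sub>v r}"
proof -
  let ?P = "\<lambda>T. T \<subseteq> set (cols M) \<and> lin_indpt T"
  have cols: "set (cols M) \<subseteq> carrier_vec n"
    using M cols_dim by blast
  obtain S where S: "maximal S ?P"
    using maximal_exists[of ?P "card (set (cols M))" "{}"]
    by (meson List.finite_set card_mono empty_iff empty_subsetI finite_lin_indpt2 rev_finite_subset)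
  then have sub: "S \<subseteq> set (cols M)" and indpt: "lin_indpt S"
    unfolding maximal_def by auto
  then have S_carrier: "S \<subseteq> carrier_vec n"
    using cols by blast
  have "c \<in> span S" if c: "c \<in> set (cols M)" for c
  proof (rule ccontr)
    assume c_notin: "c \<notin> span S"
    then have "c \<notin> S"
      using in_own_span sub cols by blast
    then have "lin_indpt (S \<union> {c})"
      using lin_dep_iff_in_span[of S c] sub cols indpt c c_notin by blast
    then have "S = S \<union> {c}"
      using S sub c unfolding maximal_def by blast
    with \<open>c \<notin> S\<close> show False by blast
  qed
  then have "orthogonal_complement S = orthogonal_complement (set (cols M))"
    using orthogonal_complement_subset[OF sub] orthogonal_complement_subset[of "set (cols M)" "span S"]
      in_orthogonal_complement_span[OF S_carrier] by blast
  with sub indpt rank_card_indpt[OF M S] show thesis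
    by (intro that) (auto simp: orthogonal_complement_cols[OF M])
qed

lemma exists_nonzero_orthogonal:
  fixes S :: "'a vec set"
  assumes S: "S \<subseteq> carrier_vec n" "finite S" "card S < n"
  obtains y where "y \<in> orthogonal_complement S" "y \<noteq> 0\<^sub>v n"
proof -
  obtain us where us: "set us = S" "distinct us"
    using finite_distinct_list S(2) by blast
  have len: "length us < n"
    using S(3) us distinct_card by fastforce
  have us_carrier: "us ! i \<in> carrier_vec n" if "i < length us" for i
    using that us S(1) nth_mem by blast
  define Q :: "'a mat" where
    "Q = mat\<^sub>r n n (\<lambda>i. if i = n - 1 then 0\<^sub>v n else if i < length us then us ! i else 0\<^sub>v n)"
  have "det Q = 0"
    unfolding Q_def by (rule det_row_0) (use len us_carrier in auto)
  then obtain y where y: "y \<in> carrier_vec n" "y \<noteq> 0\<^sub>v n" "Q *\<^sub>v y = 0\<^sub>v n"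
    using det_0_iff_vec_prod_zero_field[of Q n] by (auto simp: Q_def)
  have "us ! i \<bullet> y = 0" if "i < length us" for i
  proof -
    have "(Q *\<^sub>v y) $ i = us ! i \<bullet> y"
      using that len us_carrier by (simp add: Q_def)
    with y(3) that len show ?thesis
      by simp
  qed
  then have "y \<bullet> s = 0" if "s \<in> S" for s
    using that us S(1) y(1) comm_scalar_prod[of y n s] by (metis in_set_conv_nth subsetD)
  with y show thesis
    by (intro that) (auto simp: orthogonal_complement_def)
qed

lemma orthogonal_complement_indpt_eq_0_iff:
  fixes S :: "'a vec set"
  assumes S: "S \<subseteq> carrier_vec n" "lin_indpt S"
  shows "orthogonal_complement S = {0\<^sub>v n} \<longleftrightarrow> card S = n"
proof -
  have "finite S" "card S \<le> n"
    using li_le_dim[OF fin_dim S] dim_is_n by auto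
  moreover have "orthogonal_complement S = {0\<^sub>v n}" if "card S = n"
  proof -
    have "span S = carrier_vec n"
      using dim_li_is_basis[OF fin_dim \<open>finite S\<close> S] that by (simp add: dim_is_n basis_def)
    then have "orthogonal_complement S = orthogonal_complement (carrier_vec n)"
      using in_orthogonal_complement_span[OF S(1)] by simp
    moreover have "y = 0\<^sub>v n" if y: "y \<in> orthogonal_complement (carrier_vec n)" for y :: "'a vec"
    proof (rule eq_vecI)
      fix j assume "j < dim_vec (0\<^sub>v n :: 'a vec)"
      moreover have "y \<bullet> unit_vec n j = 0"
        using y by (auto simp: orthogonal_complement_def)
      ultimately show "y $ j = 0\<^sub>v n $ j"
        by simp
    qed (use y in \<open>auto simp: orthogonal_complement_def\<close>)
    ultimately show ?thesis
      by (auto simp: orthogonal_complement_def)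
  qed
  moreover have "orthogonal_complement S \<noteq> {0\<^sub>v n}" if "card S < n"
    using exists_nonzero_orthogonal[OF S(1) \<open>finite S\<close> that] by blast
  ultimately show ?thesis
    by fastforce
qed

lemma insert_unit_vec_lin_indpt:
  fixes S :: "'a vec set"
  assumes S: "S \<subseteq> carrier_vec n" "lin_indpt S" and g: "g < n" and zero: "\<forall>s\<in>S. s $ g = 0"
  shows "unit_vec n g \<notin> S" "lin_indpt (insert (unit_vec n g) S)"
proof -
  have "unit_vec n g \<in> orthogonal_complement S"
    using S(1) g zero by (auto simp: orthogonal_complement_def)
  then have "unit_vec n g \<in> orthogonal_complement (span S)"
    using in_orthogonal_complement_span[OF S(1)] by simp
  then have not_span: "unit_vec n g \<notin> span S"
    using g unfolding orthogonal_complement_def by fastforce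
  then show not_in: "unit_vec n g \<notin> S"
    using in_own_span[OF S(1)] by blast
  show "lin_indpt (insert (unit_vec n g) S)"
    using lin_dep_iff_in_span[OF S _ not_in] not_span by simp
qed

end

lemma left_kernel_vanishes_off_iff:
  fixes M :: "'a::field mat"
  assumes M: "M \<in> carrier_mat n r" and g: "g < n" and row_g: "\<forall>k<r. M $$ (g, k) = 0"
  shows "(\<forall>y \<in> carrier_vec n. transpose_mat M *\<^sub>v y = 0\<^sub>v r \<longrightarrow> (\<forall>j<n. j \<noteq> g \<longrightarrow> y $ j = 0)) \<longleftrightarrow>
    {y \<in> carrier_vec n. transpose_mat M *\<^sub>v y = 0\<^sub>v r \<and> y $ g = 0} = {0\<^sub>v n}"
proof
  assume kernel: "\<forall>y \<in> carrier_vec n. transpose_mat M *\<^sub>v y = 0\<^sub>v r \<longrightarrow> (\<forall>j<n. j \<noteq> g \<longrightarrow> y $ j = 0)"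
  have zero: "y = 0\<^sub>v n" if y: "y \<in> carrier_vec n" "transpose_mat M *\<^sub>v y = 0\<^sub>v r" "y $ g = 0" for y
  proof (rule eq_vecI)
    fix i assume "i < dim_vec (0\<^sub>v n :: 'a vec)"
    then show "y $ i = 0\<^sub>v n $ i"
      using y kernel by (cases "i = g") auto
  qed (use y in auto)
  moreover have "transpose_mat M *\<^sub>v 0\<^sub>v n = 0\<^sub>v r"
    using M by (intro eq_vecI) (simp_all add: scalar_prod_def)
  ultimately show "{y \<in> carrier_vec n. transpose_mat M *\<^sub>v y = 0\<^sub>v r \<and> y $ g = 0} = {0\<^sub>v n}"
    using g zero by fastforce
next
  assume trivial: "{y \<in> carrier_vec n. transpose_mat M *\<^sub>v y = 0\<^sub>v r \<and> y $ g = 0} = {0\<^sub>v n}"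
  show "\<forall>y \<in> carrier_vec n. transpose_mat M *\<^sub>v y = 0\<^sub>v r \<longrightarrow> (\<forall>j<n. j \<noteq> g \<longrightarrow> y $ j = 0)"
  proof (intro ballI impI allI)
    fix y j assume y: "y \<in> carrier_vec n" "transpose_mat M *\<^sub>v y = 0\<^sub>v r" and j: "j < n" "j \<noteq> g"
    define y' where "y' = vec n (\<lambda>i. if i = g then 0 else y $ i)"
    have "transpose_mat M *\<^sub>v y' = transpose_mat M *\<^sub>v y"
      by (rule eq_vecI) (use M row_g y(1) in \<open>auto simp: y'_def scalar_prod_def intro!: sum.cong\<close>)
    then have "y' \<in> {y \<in> carrier_vec n. transpose_mat M *\<^sub>v y = 0\<^sub>v r \<and> y $ g = 0}"
      using y(2) g by (simp add: y'_def)
    then have "y' = 0\<^sub>v n"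
      using trivial by blast
    then have "y' $ j = 0"
      using j by simp
    then show "y $ j = 0"
      using j by (simp add: y'_def)
  qed
qed

lemma (in vec_space) rank_eq_pred_iff_left_kernel:
  assumes M: "M \<in> carrier_mat n r" and g: "g < n" and row_g: "\<forall>k<r. M $$ (g, k) = 0"
  shows "rank M = n - 1 \<longleftrightarrow>
    (\<forall>y \<in> carrier_vec n. transpose_mat M *\<^sub>v y = 0\<^sub>v r \<longrightarrow> (\<forall>j<n. j \<noteq> g \<longrightarrow> y $ j = 0))"
proof -
  obtain S where S: "S \<subseteq> set (cols M)" "lin_indpt S" "card S = rank M"
    "orthogonal_complement S = {y \<in> carrier_vec n. transpose_mat M *\<^sub>v y = 0\<^sub>v r}"
    using rank_indpt_subset_cols[OF M] .
  have S_carrier: "S \<subseteq> carrier_vec n"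
    using S(1) M cols_dim by blast
  have "\<forall>s\<in>S. s $ g = 0"
    using S(1) M g row_g by (auto simp: cols_def)
  note E = insert_unit_vec_lin_indpt[OF S_carrier S(2) g this]
  let ?T = "insert (unit_vec n g) S"
  have "finite S"
    using S(1) finite_subset by blast
  then have "card ?T = rank M + 1"
    using E(1) S(3) by simp
  moreover have "orthogonal_complement ?T = {y \<in> carrier_vec n. transpose_mat M *\<^sub>v y = 0\<^sub>v r \<and> y $ g = 0}"
    using S(4) g by (auto simp: orthogonal_complement_def)
  ultimately show ?thesis
    using orthogonal_complement_indpt_eq_0_iff[of ?T] S_carrier E(2) g
      left_kernel_vanishes_off_iff[OF M g row_g] by auto
qed

lemma index_mult_mat_sum:
  assumes "A \<in> carrier_mat n c" "B \<in> carrier_mat c d" "i < n" "j < d"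
  shows "(A * B) $$ (i, j) = (\<Sum>k<c. A $$ (i, k) * B $$ (k, j))"
  using assms by (simp add: scalar_prod_def atLeast0LessThan)

lemma sum_vanishing_below_shift:
  fixes G K :: nat
  assumes "\<And>a. a < G \<Longrightarrow> f a = 0"
  shows "(\<Sum>a<G + K. f a) = (\<Sum>a<K. f (a + G))"
proof -
  have "(\<Sum>a<G + K. f a) = (\<Sum>a\<in>{0..<G}. f a) + (\<Sum>a\<in>{G..<G + K}. f a)"
    by (simp add: sum.atLeastLessThan_concat flip: atLeast0LessThan)
  also have "\<dots> = (\<Sum>a<K. f (a + G))"
    using assms sum.shift_bounds_nat_ivl[of f 0 G K] by (simp add: atLeast0LessThan add.commute)
  finally show ?thesis .
qed

lemma invertible_mat_det_nonzero:
  fixes X :: "'a::comm_ring_1 mat"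
  assumes "X \<in> carrier_mat n n" "invertible_mat X"
  shows "det X \<noteq> 0"
proof -
  obtain Y where XY: "X * Y = 1\<^sub>m n" and YX: "Y * X = 1\<^sub>m (dim_row Y)"
    using assms unfolding invertible_mat_def inverts_mat_def by auto
  then have "Y \<in> carrier_mat n n"
    using assms(1) by (metis carrier_matD carrier_matI index_mult_mat(2,3) index_one_mat(2,3))
  then have "det X * det Y = det (X * Y)"
    using assms(1) by (simp add: det_mult)
  also have "\<dots> = 1"
    by (simp add: XY)
  finally have "det X * det Y = 1" .
  then show ?thesis
    by auto
qed

lemma invertible_mat_row_nonzero:
  fixes F :: "'a::field mat"
  assumes F: "F \<in> carrier_mat m m" "invertible_mat F" and i: "i < m"
  obtains j where "j < m" "F $$ (i, j) \<noteq> 0"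
proof (rule ccontr)
  assume "\<not> thesis"
  with that have "transpose_mat F *\<^sub>v unit_vec m i = 0\<^sub>v m"
    using F(1) i by (intro eq_vecI) auto
  moreover have "unit_vec m i \<noteq> (0\<^sub>v m :: 'a vec)"
    using i arg_cong[of "unit_vec m i" "0\<^sub>v m" "\<lambda>v. v $ i"] by auto
  ultimately have "det (transpose_mat F) = 0"
    using F(1) by (subst det_0_iff_vec_prod_zero_field[of _ m]) (auto intro!: exI[of _ "unit_vec m i"])
  then show False
    using invertible_mat_det_nonzero[OF F] det_transpose[OF F(1)] by simp
qed

definition block_upper_triangular :: "nat \<Rightarrow> nat \<Rightarrow> 'a::zero mat \<Rightarrow> bool" where
  "block_upper_triangular G m X \<longleftrightarrow> (\<forall>i j. G \<le> i \<longrightarrow> i < m \<longrightarrow> j < G \<longrightarrow> X $$ (i, j) = 0)"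

lemma det_block_upper_triangular:
  fixes X :: "'a::idom mat"
  assumes X: "X \<in> carrier_mat (G + K) (G + K)" and tri: "block_upper_triangular G (G + K) X"
  shows "det X = det (mat G G (\<lambda>(i, j). X $$ (i, j))) * det (mat K K (\<lambda>(i, j). X $$ (i + G, j + G)))"
proof -
  obtain X1 X2 X3 X4 where split: "split_block X G G = (X1, X2, X3, X4)"
    by (cases "split_block X G G") auto
  have blocks: "X1 \<in> carrier_mat G G" "X2 \<in> carrier_mat G K" "X4 \<in> carrier_mat K K"
    and X_eq: "X = four_block_mat X1 X2 X3 X4"
    using split_block[OF split] X by auto
  have "X3 = 0\<^sub>m K G"
    using split X tri by (auto simp: split_block_def block_upper_triangular_def)
  then have "det X = det X1 * det X4"
    using det_four_block_mat_lower_left_zero[OF blocks(1,2) _ blocks(3)] X_eq by simp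
  moreover have "X1 = mat G G (\<lambda>(i, j). X $$ (i, j))" "X4 = mat K K (\<lambda>(i, j). X $$ (i + G, j + G))"
    using split X by (auto simp: split_block_def)
  ultimately show ?thesis
    by simp
qed

lemma eq_zero_vec_split:
  assumes "v \<in> carrier_vec m" "\<And>a. a < G \<Longrightarrow> v $ a = 0" "\<And>a. G \<le> a \<Longrightarrow> a < m \<Longrightarrow> v $ a = 0"
  shows "v = 0\<^sub>v m"
proof (rule eq_vecI)
  fix a assume "a < dim_vec (0\<^sub>v m :: 'a vec)"
  then show "v $ a = 0\<^sub>v m $ a"
    using assms by (cases "a < G") auto
qed (use assms(1) in simp)

lemma upper_left_block_left_injective:
  fixes X :: "'a::field mat"
  assumes X: "X \<in> carrier_mat m m" "det X \<noteq> 0" "block_upper_triangular G m X" and G: "G \<le> m"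
    and u: "u \<in> carrier_vec m" "\<And>a. G \<le> a \<Longrightarrow> a < m \<Longrightarrow> u $ a = 0"
      "\<And>b. b < G \<Longrightarrow> (transpose_mat X *\<^sub>v u) $ b = 0"
  shows "u = 0\<^sub>v m"
proof -
  define K where "K = m - G"
  have m: "m = G + K"
    using G by (simp add: K_def)
  let ?X11 = "mat G G (\<lambda>(i, j). X $$ (i, j))"
  have "det ?X11 \<noteq> 0"
    using det_block_upper_triangular[of X G K] X m by auto
  then have det: "det (transpose_mat ?X11) \<noteq> 0"
    using det_transpose[of ?X11 G] by simp
  define u1 where "u1 = vec G (\<lambda>a. u $ a)"
  have "transpose_mat ?X11 *\<^sub>v u1 = 0\<^sub>v G"
  proof (rule eq_vecI)
    fix b assume "b < dim_vec (0\<^sub>v G :: 'a vec)"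
    then have b: "b < G" by simp
    have "(transpose_mat ?X11 *\<^sub>v u1) $ b = (\<Sum>a<G. X $$ (a, b) * u $ a)"
      using b G by (simp add: u1_def scalar_prod_def atLeast0LessThan)
    also have "\<dots> = (\<Sum>a<m. X $$ (a, b) * u $ a)"
      using G u(2) by (intro sum.mono_neutral_left) auto
    also have "\<dots> = (transpose_mat X *\<^sub>v u) $ b"
      using X(1) u(1) b G by (simp add: scalar_prod_def atLeast0LessThan)
    finally show "(transpose_mat ?X11 *\<^sub>v u1) $ b = 0\<^sub>v G $ b"
      using u(3) b by simp
  qed simp
  then have "u1 = 0\<^sub>v G"
    using det det_0_iff_vec_prod_zero_field[of "transpose_mat ?X11" G] by (force simp: u1_def)
  have "u $ a = 0" if "a < G" for a
  proof -
    have "u1 $ a = 0"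
      using \<open>u1 = 0\<^sub>v G\<close> that by simp
    then show ?thesis
      using that by (simp add: u1_def)
  qed
  then show ?thesis
    using eq_zero_vec_split[OF u(1)] u(2) by blast
qed

lemma lower_right_block_injective:
  fixes X :: "'a::field mat"
  assumes X: "X \<in> carrier_mat m m" "det X \<noteq> 0" "block_upper_triangular G m X" and G: "G \<le> m"
    and v: "v \<in> carrier_vec m" "\<And>a. a < G \<Longrightarrow> v $ a = 0" "\<And>a. G \<le> a \<Longrightarrow> a < m \<Longrightarrow> (X *\<^sub>v v) $ a = 0"
  shows "v = 0\<^sub>v m"
proof -
  define K where "K = m - G"
  have m: "m = G + K"
    using G by (simp add: K_def)
  let ?X22 = "mat K K (\<lambda>(i, j). X $$ (i + G, j + G))"
  have det: "det ?X22 \<noteq> 0"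
    using det_block_upper_triangular[of X G K] X m by auto
  define v2 where "v2 = vec K (\<lambda>a. v $ (a + G))"
  have "?X22 *\<^sub>v v2 = 0\<^sub>v K"
  proof (rule eq_vecI)
    fix l assume "l < dim_vec (0\<^sub>v K :: 'a vec)"
    then have l: "l < K" by simp
    have "(?X22 *\<^sub>v v2) $ l = (\<Sum>a<K. X $$ (l + G, a + G) * v $ (a + G))"
      using l by (simp add: v2_def scalar_prod_def atLeast0LessThan)
    also have "\<dots> = (\<Sum>a<G + K. X $$ (l + G, a) * v $ a)"
      using v(2) by (simp add: sum_vanishing_below_shift)
    also have "\<dots> = (X *\<^sub>v v) $ (l + G)"
      using X(1) v(1) l m by (simp add: scalar_prod_def atLeast0LessThan)
    finally show "(?X22 *\<^sub>v v2) $ l = 0\<^sub>v K $ l"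
      using v(3) l m by simp
  qed simp
  then have "v2 = 0\<^sub>v K"
    using det det_0_iff_vec_prod_zero_field[of ?X22 K] by (force simp: v2_def)
  have "v $ a = 0" if "G \<le> a" "a < m" for a
  proof -
    have "v2 $ (a - G) = 0"
      using \<open>v2 = 0\<^sub>v K\<close> that m by simp
    then show ?thesis
      using that m by (simp add: v2_def)
  qed
  then show ?thesis
    using eq_zero_vec_split[OF v(1) v(2)] by blast
qed

definition row_add_mat :: "nat \<Rightarrow> nat \<Rightarrow> (nat \<Rightarrow> 'a) \<Rightarrow> 'a::comm_ring_1 mat" where
  "row_add_mat m g w = mat m m (\<lambda>(i, k). (if i = k then 1 else 0) + (if i = g then w k else 0))"

lemma row_add_mat_carrier [simp]: "row_add_mat m g w \<in> carrier_mat m m"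
  by (simp add: row_add_mat_def)

lemma index_row_add_mat_mult:
  assumes "X \<in> carrier_mat m c" "i < m" "j < c"
  shows "(row_add_mat m g w * X) $$ (i, j) = X $$ (i, j) + (if i = g then \<Sum>k<m. w k * X $$ (k, j) else 0)"
proof -
  have "(row_add_mat m g w * X) $$ (i, j) = (\<Sum>k<m. row_add_mat m g w $$ (i, k) * X $$ (k, j))"
    using assms by (intro index_mult_mat_sum) auto
  also have "\<dots> = (\<Sum>k<m. (if k = i then X $$ (k, j) else 0) + (if i = g then w k * X $$ (k, j) else 0))"
    using assms(2) by (intro sum.cong) (auto simp: row_add_mat_def distrib_right)
  also have "\<dots> = X $$ (i, j) + (if i = g then \<Sum>k<m. w k * X $$ (k, j) else 0)"
    using assms(2) by (cases "i = g") (simp_all add: sum.distrib)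
  finally show ?thesis .
qed

lemma row_add_mat_mult_neg:
  assumes "w g = 0"
  shows "row_add_mat m g w * row_add_mat m g (\<lambda>k. - w k) = 1\<^sub>m m"
proof (rule eq_matI)
  fix i j assume "i < dim_row (1\<^sub>m m :: 'a mat)" "j < dim_col (1\<^sub>m m :: 'a mat)"
  then have ij: "i < m" "j < m" by auto
  have "w k * row_add_mat m g (\<lambda>k. - w k) $$ (k, j) = (if k = j then w j else 0)" if "k < m" for k
    using that ij assms by (auto simp: row_add_mat_def)
  then have "(\<Sum>k<m. w k * row_add_mat m g (\<lambda>k. - w k) $$ (k, j)) = w j"
    using ij by simp
  moreover have "(row_add_mat m g w * row_add_mat m g (\<lambda>k. - w k)) $$ (i, j) =
      row_add_mat m g (\<lambda>k. - w k) $$ (i, j) +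
      (if i = g then \<Sum>k<m. w k * row_add_mat m g (\<lambda>k. - w k) $$ (k, j) else 0)"
    using ij by (intro index_row_add_mat_mult) auto
  ultimately show "(row_add_mat m g w * row_add_mat m g (\<lambda>k. - w k)) $$ (i, j) = 1\<^sub>m m $$ (i, j)"
    using ij by (simp add: row_add_mat_def)
qed (auto simp: row_add_mat_def)

lemma invertible_row_add_mat:
  assumes "w g = 0"
  shows "invertible_mat (row_add_mat m g w)"
proof -
  have "row_add_mat m g (\<lambda>k. - w k) * row_add_mat m g w = 1\<^sub>m m"
    using row_add_mat_mult_neg[of "\<lambda>k. - w k" g m] assms by simp
  then show ?thesis
    using row_add_mat_mult_neg[of w g m, OF assms]
    unfolding invertible_mat_def inverts_mat_def square_mat.simps
    by (metis carrier_matD row_add_mat_carrier)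
qed

lemma zero_A21_mult:
  fixes F A :: "real mat"
  assumes F: "F \<in> carrier_mat m m" "block_upper_triangular G m F"
    and A: "A \<in> carrier_mat m (Suc p * m)" "zero_A21 G m p A"
  shows "zero_A21 G m p (F * A)"
  unfolding zero_A21_def
proof (intro allI impI)
  fix i j assume ij: "G \<le> i \<and> i < m \<and> j < Suc p * m \<and> j mod m < G"
  have "F $$ (i, k) * A $$ (k, j) = 0" if "k < m" for k
    using F(2) A(2) ij that by (cases "k < G") (simp_all add: block_upper_triangular_def zero_A21_def)
  moreover have "(F * A) $$ (i, j) = (\<Sum>k<m. F $$ (i, k) * A $$ (k, j))"
    using F(1) A(1) ij by (intro index_mult_mat_sum) auto
  ultimately show "(F * A) $$ (i, j) = 0"
    by (auto intro!: sum.neutral)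
qed

lemma zero_cov_block_transpose:
  assumes "X \<in> carrier_mat m m" "zero_cov_block G m X"
  shows "zero_cov_block G m (transpose_mat X)"
  using assms by (auto simp: zero_cov_block_def)

lemma zero_cov_block_mult:
  fixes X Y :: "real mat"
  assumes X: "X \<in> carrier_mat m m" "zero_cov_block G m X" and Y: "Y \<in> carrier_mat m m" "zero_cov_block G m Y"
  shows "zero_cov_block G m (X * Y)"
  unfolding zero_cov_block_def
proof (intro allI impI conjI)
  fix i j assume ij: "i < G \<and> G \<le> j \<and> j < m"
  have "X $$ (i, k) * Y $$ (k, j) = 0" "X $$ (j, k) * Y $$ (k, i) = 0" if "k < m" for k
    using X(2) Y(2) ij that by (cases "k < G"; simp add: zero_cov_block_def)+
  moreover have "(X * Y) $$ (i, j) = (\<Sum>k<m. X $$ (i, k) * Y $$ (k, j))"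
    using X(1) Y(1) ij by (intro index_mult_mat_sum) auto
  moreover have "(X * Y) $$ (j, i) = (\<Sum>k<m. X $$ (j, k) * Y $$ (k, i))"
    using X(1) Y(1) ij by (intro index_mult_mat_sum) auto
  ultimately show "(X * Y) $$ (i, j) = 0" "(X * Y) $$ (j, i) = 0"
    by (auto intro!: sum.neutral)
qed

lemma eq_restrictions_iff:
  fixes B :: "real mat"
  assumes B: "B \<in> carrier_mat m N" and Phi: "\<forall>i<m. Phi i \<in> carrier_mat N (R i)"
  shows "eq_restrictions m Phi B \<longleftrightarrow> (\<forall>i<m. \<forall>l<R i. (B * Phi i) $$ (i, l) = 0)"
proof -
  have "col (Phi i) l \<bullet> row B i = (B * Phi i) $$ (i, l)" if "i < m" "l < R i" for i l
    using that B Phi comm_scalar_prod[of "col (Phi i) l" N "row B i"] by auto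
  moreover have "dim_col (Phi i) = R i" if "i < m" for i
    using that Phi by auto
  ultimately show ?thesis
    by (auto simp: eq_restrictions_def vec_eq_iff)
qed

lemma upper_rows_mult_index:
  assumes "A \<in> carrier_mat m N" "Phi \<in> carrier_mat N r" "G \<le> m" "k < G" "l < r"
  shows "(mat G N (\<lambda>(i, j). A $$ (i, j)) * Phi) $$ (k, l) = (A * Phi) $$ (k, l)"
  using assms by (simp add: scalar_prod_def)

lemma transpose_upper_rows_mult_vec_index:
  assumes A: "A \<in> carrier_mat m N" and Phi: "Phi \<in> carrier_mat N r" and G: "G \<le> m"
    and x: "x \<in> carrier_vec G" and l: "l < r"
  shows "(transpose_mat (mat G N (\<lambda>(i, j). A $$ (i, j)) * Phi) *\<^sub>v x) $ l = (\<Sum>k<G. (A * Phi) $$ (k, l) * x $ k)"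
proof -
  have "(transpose_mat (mat G N (\<lambda>(i, j). A $$ (i, j)) * Phi) *\<^sub>v x) $ l
      = (\<Sum>k<G. (mat G N (\<lambda>(i, j). A $$ (i, j)) * Phi) $$ (k, l) * x $ k)"
    using Phi x l by (simp add: scalar_prod_def atLeast0LessThan)
  also have "\<dots> = (\<Sum>k<G. (A * Phi) $$ (k, l) * x $ k)"
    using upper_rows_mult_index[OF A Phi G _ l] by simp
  finally show ?thesis .
qed

lemma admissible_block_upper_triangular:
  fixes A F :: "real mat"
  assumes A: "A \<in> carrier_mat m (Suc p * m)" and G: "G \<le> m"
    and A0: "invertible_mat (mat m m (\<lambda>(i, j). A $$ (i, j)))" and A21: "zero_A21 G m p A"
    and F: "F \<in> carrier_mat m m" and FA21: "zero_A21 G m p (F * A)"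
  shows "block_upper_triangular G m F"
  unfolding block_upper_triangular_def
proof (intro allI impI)
  fix i k assume i: "G \<le> i" "i < m" and k: "k < G"
  let ?A0 = "mat m m (\<lambda>(i, j). A $$ (i, j))"
  have A_low: "A $$ (a, b) = 0" if "G \<le> a" "a < m" "b < G" for a b
    using A21 that G by (auto simp: zero_A21_def)
  then have tri: "block_upper_triangular G m ?A0"
    by (simp add: block_upper_triangular_def)
  have det: "det ?A0 \<noteq> 0"
    by (rule invertible_mat_det_nonzero[of _ m, OF _ A0]) simp
  define u where "u = vec m (\<lambda>a. if a < G then F $$ (i, a) else 0)"
  have "(transpose_mat ?A0 *\<^sub>v u) $ b = 0" if b: "b < G" for b
  proof -
    have "(transpose_mat ?A0 *\<^sub>v u) $ b = (\<Sum>a<m. F $$ (i, a) * A $$ (a, b))"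
      using b G A_low by (auto simp: u_def scalar_prod_def atLeast0LessThan intro!: sum.cong)
    also have "\<dots> = (F * A) $$ (i, b)"
      using i b G by (intro index_mult_mat_sum[OF F A, symmetric]) auto
    also have "\<dots> = 0"
      using FA21 i b G by (auto simp: zero_A21_def)
    finally show ?thesis .
  qed
  then have "u = 0\<^sub>v m"
    using upper_left_block_left_injective[OF _ det tri G] by (simp add: u_def)
  then have "u $ k = 0"
    using k G by simp
  then show "F $$ (i, k) = 0"
    using k G by (simp add: u_def)
qed

lemma admissible_upper_right_zero:
  fixes F Sig :: "real mat"
  assumes F: "F \<in> carrier_mat m m" "invertible_mat F" "block_upper_triangular G m F"
    and Sig: "Sig \<in> carrier_mat m m" and pd: "\<forall>x \<in> carrier_vec m. x \<noteq> 0\<^sub>v m \<longrightarrow> x \<bullet> (Sig *\<^sub>v x) > 0"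
    and Sig_block: "zero_cov_block G m Sig" and FSF_block: "zero_cov_block G m (F * Sig * transpose_mat F)"
    and ij: "i < G" "G \<le> j" "j < m"
  shows "F $$ (i, j) = 0"
proof -
  have assoc: "F * Sig * transpose_mat F = F * (Sig * transpose_mat F)"
    using F Sig by (intro assoc_mult_mat) auto
  \<comment> \<open>v is the lower part of column i of Sig F' and z is row i of F_12; F_22 v = 0 forces
    v = 0, and then z' Sig z = 0.\<close>
  define v where "v = vec m (\<lambda>a. if G \<le> a then (Sig * transpose_mat F) $$ (a, i) else 0)"
  have "(F *\<^sub>v v) $ l = 0" if l: "G \<le> l" "l < m" for l
  proof -
    have "(F *\<^sub>v v) $ l = (\<Sum>a<m. F $$ (l, a) * (Sig * transpose_mat F) $$ (a, i))"
      using F(1,3) l by (auto simp: v_def scalar_prod_def atLeast0LessThan block_upper_triangular_def intro!: sum.cong)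
    also have "\<dots> = (F * (Sig * transpose_mat F)) $$ (l, i)"
      using F Sig l ij by (intro index_mult_mat_sum[of F m m "Sig * transpose_mat F" m, symmetric]) auto
    also have "\<dots> = 0"
      using FSF_block l ij by (simp add: assoc zero_cov_block_def)
    finally show ?thesis .
  qed
  then have "v = 0\<^sub>v m"
    using lower_right_block_injective[OF F(1) invertible_mat_det_nonzero[OF F(1,2)] F(3)] ij
    by (simp add: v_def)
  define z where "z = vec m (\<lambda>b. if G \<le> b then F $$ (i, b) else 0)"
  have Sig_z: "(Sig *\<^sub>v z) $ a = 0" if "G \<le> a" "a < m" for a
  proof -
    have "(Sig *\<^sub>v z) $ a = (\<Sum>b<m. Sig $$ (a, b) * F $$ (i, b))"
      using Sig Sig_block that by (auto simp: z_def scalar_prod_def atLeast0LessThan zero_cov_block_def intro!: sum.cong)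
    also have "\<dots> = v $ a"
      using F Sig that ij by (simp add: v_def scalar_prod_def atLeast0LessThan)
    finally show ?thesis
      using \<open>v = 0\<^sub>v m\<close> that by simp
  qed
  have "z \<bullet> (Sig *\<^sub>v z) = (\<Sum>a<m. z $ a * (Sig *\<^sub>v z) $ a)"
    using Sig by (simp add: z_def scalar_prod_def atLeast0LessThan)
  also have "\<dots> = 0"
    using Sig_z by (intro sum.neutral) (auto simp: z_def)
  finally have "z = 0\<^sub>v m"
    using pd by (force simp: z_def)
  then have "z $ j = 0"
    using ij by simp
  then show ?thesis
    using ij by (simp add: z_def)
qed

lemma admissible_row_add_mat:
  fixes A Sig :: "real mat"
  assumes A: "A \<in> carrier_mat m (Suc p * m)" "zero_A21 G m p A" "eq_restrictions m Phi A"
    and Sig: "Sig \<in> carrier_mat m m" "zero_cov_block G m Sig"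
    and Phi: "\<forall>i<m. Phi i \<in> carrier_mat (Suc p * m) (R i)"
    and g: "g < G"
    and w: "\<And>k. G \<le> k \<or> k = g \<Longrightarrow> w k = 0"
    and comb: "\<And>l. l < R g \<Longrightarrow> (\<Sum>k<m. w k * (A * Phi g) $$ (k, l)) = 0"
  shows "admissible G m p A Sig Phi (row_add_mat m g w)"
proof -
  let ?F = "row_add_mat m g w"
  have F: "?F \<in> carrier_mat m m"
    by simp
  have "block_upper_triangular G m ?F"
    using g by (auto simp: block_upper_triangular_def row_add_mat_def)
  then have FA21: "zero_A21 G m p (?F * A)"
    using zero_A21_mult F A(1,2) by blast
  have F_diag: "zero_cov_block G m ?F"
    using g w by (auto simp: zero_cov_block_def row_add_mat_def)
  then have FS: "zero_cov_block G m (?F * Sig)"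
    using zero_cov_block_mult F Sig by blast
  have FSF: "zero_cov_block G m (?F * Sig * transpose_mat ?F)"
    using mult_carrier_mat[OF F Sig(1)] by (intro zero_cov_block_mult[OF _ FS _ zero_cov_block_transpose[OF F F_diag]]) auto
  have "(?F * A * Phi i) $$ (i, l) = 0" if i: "i < m" and l: "l < R i" for i l
  proof -
    have Phi_i: "Phi i \<in> carrier_mat (Suc p * m) (R i)"
      using Phi i by simp
    have "?F * A * Phi i = ?F * (A * Phi i)"
      by (rule assoc_mult_mat[OF F A(1) Phi_i])
    then have "(?F * A * Phi i) $$ (i, l) =
        (A * Phi i) $$ (i, l) + (if i = g then \<Sum>k<m. w k * (A * Phi i) $$ (k, l) else 0)"
      using A(1) Phi_i i l by (simp only:) (rule index_row_add_mat_mult, auto)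
    moreover have "(A * Phi i) $$ (i, l) = 0"
      using A(1,3) Phi i l by (simp add: eq_restrictions_iff)
    ultimately show ?thesis
      using comb l by (cases "i = g") simp_all
  qed
  then have "eq_restrictions m Phi (?F * A)"
    using mult_carrier_mat[OF F A(1)] Phi by (subst eq_restrictions_iff) auto
  with F FA21 FSF show ?thesis
    unfolding admissible_def using invertible_row_add_mat w by blast
qed

lemma identified_imp_left_kernel:
  fixes A Sig :: "real mat" and Phi :: "nat \<Rightarrow> real mat" and G m p g :: nat
  defines "M \<equiv> mat G (Suc p * m) (\<lambda>(i, j). A $$ (i, j)) * Phi g"
  assumes A: "A \<in> carrier_mat m (Suc p * m)" "zero_A21 G m p A" "eq_restrictions m Phi A"
    and Sig: "Sig \<in> carrier_mat m m" "zero_cov_block G m Sig"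
    and Phi: "\<forall>i<m. Phi i \<in> carrier_mat (Suc p * m) (R i)"
    and g: "g < G" and G: "G \<le> m"
    and ident: "identified G m p A Sig Phi g"
  shows "\<forall>x\<in>carrier_vec G. transpose_mat M *\<^sub>v x = 0\<^sub>v (R g) \<longrightarrow> (\<forall>j<G. j \<noteq> g \<longrightarrow> x $ j = 0)"
proof (intro ballI impI allI)
  fix x j assume x: "x \<in> carrier_vec G" "transpose_mat M *\<^sub>v x = 0\<^sub>v (R g)" and j: "j < G" "j \<noteq> g"
  define w where "w k = (if k < G \<and> k \<noteq> g then x $ k else 0)" for k
  have Phi_g: "Phi g \<in> carrier_mat (Suc p * m) (R g)"
    using Phi g G by simp
  have w0: "w k = 0" if "G \<le> k \<or> k = g" for k
    using that by (auto simp: w_def)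
  have comb: "(\<Sum>k<m. w k * (A * Phi g) $$ (k, l)) = 0" if l: "l < R g" for l
  proof -
    have "(A * Phi g) $$ (g, l) = 0"
      using A(1,3) Phi g G l by (simp add: eq_restrictions_iff)
    then have "(\<Sum>k<m. w k * (A * Phi g) $$ (k, l)) = (\<Sum>k<G. (A * Phi g) $$ (k, l) * x $ k)"
      using G by (subst sum.mono_neutral_right[of "{..<m}" "{..<G}"]) (auto simp: w_def mult.commute intro!: sum.cong)
    also have "\<dots> = (transpose_mat M *\<^sub>v x) $ l"
      unfolding M_def using transpose_upper_rows_mult_vec_index[OF A(1) Phi_g G x(1) l] ..
    finally show ?thesis
      using x(2) l by simp
  qed
  have "admissible G m p A Sig Phi (row_add_mat m g w)"
    using admissible_row_add_mat[OF A Sig Phi g w0 comb] .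
  then have "row_add_mat m g w $$ (g, j) = 0"
    using ident j G unfolding identified_def by auto
  then show "x $ j = 0"
    using j g G by (simp add: row_add_mat_def w_def)
qed

lemma row_in_left_kernel:
  fixes A F :: "real mat" and Phi :: "nat \<Rightarrow> real mat" and G m p g :: nat
  defines "M \<equiv> mat G (Suc p * m) (\<lambda>(i, j). A $$ (i, j)) * Phi g"
  assumes A: "A \<in> carrier_mat m (Suc p * m)" and Phi: "\<forall>i<m. Phi i \<in> carrier_mat (Suc p * m) (R i)"
    and g: "g < G" and G: "G \<le> m"
    and F: "F \<in> carrier_mat m m" "eq_restrictions m Phi (F * A)" "\<And>j. G \<le> j \<Longrightarrow> j < m \<Longrightarrow> F $$ (g, j) = 0"
  shows "transpose_mat M *\<^sub>v vec G (\<lambda>k. F $$ (g, k)) = 0\<^sub>v (R g)"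
proof -
  have Phi_g: "Phi g \<in> carrier_mat (Suc p * m) (R g)"
    using Phi g G by simp
  have "(\<Sum>k<G. (A * Phi g) $$ (k, l) * F $$ (g, k)) = 0" if l: "l < R g" for l
  proof -
    have "(\<Sum>k<G. (A * Phi g) $$ (k, l) * F $$ (g, k)) = (\<Sum>k<m. F $$ (g, k) * (A * Phi g) $$ (k, l))"
      using G F(3) by (intro sum.mono_neutral_cong_left) (auto simp: mult.commute)
    also have "\<dots> = (F * (A * Phi g)) $$ (g, l)"
      using F(1) A Phi_g g G l by (intro index_mult_mat_sum[of F m m "A * Phi g" "R g", symmetric]) auto
    also have "\<dots> = (F * A * Phi g) $$ (g, l)"
      by (simp add: assoc_mult_mat[OF F(1) A Phi_g])
    also have "\<dots> = 0"
      using F(2) mult_carrier_mat[OF F(1) A] Phi g G l by (simp add: eq_restrictions_iff)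
    finally show ?thesis .
  qed
  then show ?thesis
    unfolding M_def using transpose_upper_rows_mult_vec_index[OF A Phi_g G] Phi_g
    by (intro eq_vecI) auto
qed

lemma left_kernel_imp_identified:
  fixes A Sig :: "real mat" and Phi :: "nat \<Rightarrow> real mat" and G m p g :: nat
  defines "M \<equiv> mat G (Suc p * m) (\<lambda>(i, j). A $$ (i, j)) * Phi g"
  assumes A: "A \<in> carrier_mat m (Suc p * m)" "invertible_mat (mat m m (\<lambda>(i, j). A $$ (i, j)))"
      "zero_A21 G m p A"
    and Sig: "Sig \<in> carrier_mat m m" "\<forall>x \<in> carrier_vec m. x \<noteq> 0\<^sub>v m \<longrightarrow> x \<bullet> (Sig *\<^sub>v x) > 0"
      "zero_cov_block G m Sig"
    and Phi: "\<forall>i<m. Phi i \<in> carrier_mat (Suc p * m) (R i)"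
    and g: "g < G" and G: "G \<le> m"
    and kernel: "\<forall>x\<in>carrier_vec G. transpose_mat M *\<^sub>v x = 0\<^sub>v (R g) \<longrightarrow> (\<forall>j<G. j \<noteq> g \<longrightarrow> x $ j = 0)"
  shows "identified G m p A Sig Phi g"
  unfolding identified_def
proof (intro allI impI)
  fix F assume "admissible G m p A Sig Phi F"
  then have F: "F \<in> carrier_mat m m" "invertible_mat F" "zero_A21 G m p (F * A)"
      "zero_cov_block G m (F * Sig * transpose_mat F)" "eq_restrictions m Phi (F * A)"
    unfolding admissible_def by auto
  have "block_upper_triangular G m F"
    using admissible_block_upper_triangular[OF A(1) G A(2,3) F(1,3)] .
  then have upper_right: "F $$ (g, j) = 0" if "G \<le> j" "j < m" for j
    using admissible_upper_right_zero[OF F(1,2) _ Sig _ g that] F(4) by blast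
  define f where "f = vec G (\<lambda>k. F $$ (g, k))"
  have "transpose_mat M *\<^sub>v f = 0\<^sub>v (R g)"
    unfolding M_def f_def using row_in_left_kernel[OF A(1) Phi g G F(1,5) upper_right] .
  then have off_diag: "F $$ (g, j) = 0" if "j < m" "j \<noteq> g" for j
    using kernel that upper_right by (cases "j < G") (auto simp: f_def)
  have "g < m"
    using g G by simp
  then obtain j where "j < m" "F $$ (g, j) \<noteq> 0"
    using invertible_mat_row_nonzero[OF F(1,2)] by blast
  then have "F $$ (g, g) \<noteq> 0"
    using off_diag by (cases "j = g") auto
  with off_diag show "(\<forall>j<m. j \<noteq> g \<longrightarrow> F $$ (g, j) = 0) \<and> F $$ (g, g) \<noteq> 0"
    by blast
qed

theorem corollary2p1:
  fixes G K m p g :: nat and A Sig :: "real mat"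
    and Phi :: "nat \<Rightarrow> real mat" and R :: "nat \<Rightarrow> nat"
  assumes "G + K = m"
    and "A \<in> carrier_mat m (Suc p * m)"
    and "invertible_mat (mat m m (\<lambda>(i, j). A $$ (i, j)))"
    and "Sig \<in> carrier_mat m m" and "transpose_mat Sig = Sig"
    and "\<forall>x \<in> carrier_vec m. x \<noteq> 0\<^sub>v m \<longrightarrow> x \<bullet> (Sig *\<^sub>v x) > 0"
    and "zero_A21 G m p A"
    and "zero_cov_block G m Sig"
    and "\<forall>i<m. Phi i \<in> carrier_mat (Suc p * m) (R i)"
    and "eq_restrictions m Phi A"
    and "g < G"
  shows "identified G m p A Sig Phi g \<longleftrightarrow>
    vec_space.rank G (mat G (Suc p * m) (\<lambda>(i, j). A $$ (i, j)) * Phi g) = G - 1"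
proof -
  let ?M = "mat G (Suc p * m) (\<lambda>(i, j). A $$ (i, j)) * Phi g"
  have G: "G \<le> m"
    using assms(1) by simp
  have Phi_g: "Phi g \<in> carrier_mat (Suc p * m) (R g)"
    using assms(9,11) G by simp
  have M: "?M \<in> carrier_mat G (R g)"
    by (rule mult_carrier_mat[OF mat_carrier Phi_g])
  have "\<forall>l<R g. ?M $$ (g, l) = 0"
    using upper_rows_mult_index[OF assms(2) Phi_g G assms(11)] assms(2,9,10,11) G
    by (simp add: eq_restrictions_iff)
  then have "vec_space.rank G ?M = G - 1 \<longleftrightarrow>
      (\<forall>x\<in>carrier_vec G. transpose_mat ?M *\<^sub>v x = 0\<^sub>v (R g) \<longrightarrow> (\<forall>j<G. j \<noteq> g \<longrightarrow> x $ j = 0))"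
    using vec_space.rank_eq_pred_iff_left_kernel[OF M assms(11)] by blast
  also have "\<dots> \<longleftrightarrow> identified G m p A Sig Phi g"
    using identified_imp_left_kernel[OF assms(2,7,10,4,8,9,11) G]
      left_kernel_imp_identified[OF assms(2,3,7,4,6,8,9,11) G] by blast
  finally show ?thesis ..
qed

end
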